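(* Let $G\in\mathcal{F}$, let $C$ be a clique of maximum size in $G$ chosen among all maximum cliques so that the number of edges with exactly one endpoint in $C$ is minimal, and let $X,Y$ be a partition of the vertex set of $C$ into two nonempty sets such that every vertex outside $C$ has its set of neighbors in $C$ equal to $X$, $Y$ or $\emptyset$. Let $a=|X|$, $b=|Y|$, let $\Gamma X$ (resp. $\Gamma Y$) be the set of vertices outside $C$ whose neighborhood in $C$ is $X$ (resp. $Y$), and let $G[\Gamma X]$, $G[\Gamma Y]$ be the induced subgraphs. Then, for some nonnegative integers $l,k,m$: (i) if $b=1$ (resp. $a=1$), then $G[\Gamma X]=lK_1$ (resp. $G[\Gamma Y]=lK_1$); (ii) if $b=2$ (resp. $a=2$), then $G[\Gamma X]=lK_1\cup kK_2$ (resp. $G[\Gamma Y]=lK_1\cup kK_2$); (iii) if $b=3$ (resp. $a=3$), then $G[\Gamma X]=lK_1\cup kK_2\cup mK_3$ (resp. $G[\Gamma Y]=lK_1\cup kK_2\cup mK_3$); (iv) if $b\geq 4$ (resp. $a\geq 4$), then $G[\Gamma X]=lK_1\cup kK_2$ (resp. $G[\Gamma Y]=lK_1\cup kK_2$).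
   Context: Graphs are finite and simple; spectrum means adjacency spectrum. $\mathcal{F}$ denotes the set of connected graphs whose spectrum consists of exactly one eigenvalue $r>2$, exactly one eigenvalue $s<-1$, and all remaining eigenvalues (with multiplicity) equal to $2$ or $-1$. For such $G$ and $C$ a partition $X,Y$ as described exists. $lK_1\cup kK_2\cup mK_3$ denotes the disjoint union of $l$ isolated vertices, $k$ edges and $m$ triangles. *)

theory Defs
  imports "Jordan_Normal_Form.Char_Poly" "HOL-Library.Multiset"
begin

definition simple_graph :: "nat \<Rightarrow> (nat \<Rightarrow> nat \<Rightarrow> bool) \<Rightarrow> bool" where
  "simple_graph n E \<longleftrightarrow> (\<forall>u v. E u v \<longrightarrow> u < n \<and> v < n) \<and>
     (\<forall>u v. E u v \<longrightarrow> E v u) \<and> (\<forall>u. \<not> E u u)"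

definition connected_graph :: "nat \<Rightarrow> (nat \<Rightarrow> nat \<Rightarrow> bool) \<Rightarrow> bool" where
  "connected_graph n E \<longleftrightarrow> n \<ge> 1 \<and> (\<forall>u<n. \<forall>v<n. E\<^sup>*\<^sup>* u v)"

definition adj_matrix :: "nat \<Rightarrow> (nat \<Rightarrow> nat \<Rightarrow> bool) \<Rightarrow> real mat" where
  "adj_matrix n E = mat n n (\<lambda>(i,j). if E i j then 1 else 0)"

definition has_spectrum :: "nat \<Rightarrow> (nat \<Rightarrow> nat \<Rightarrow> bool) \<Rightarrow> real multiset \<Rightarrow> bool" where
  "has_spectrum n E M \<longleftrightarrow> char_poly (adj_matrix n E) = (\<Prod>x\<in>#M. [:-x, 1:])"

definition in_F :: "nat \<Rightarrow> (nat \<Rightarrow> nat \<Rightarrow> bool) \<Rightarrow> bool" where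
  "in_F n E \<longleftrightarrow> simple_graph n E \<and> connected_graph n E \<and>
     (\<exists>r s M. r > 2 \<and> s < -1 \<and> set_mset M \<subseteq> {2, -1} \<and>
        has_spectrum n E ({#r, s#} + M))"

definition is_clique :: "nat \<Rightarrow> (nat \<Rightarrow> nat \<Rightarrow> bool) \<Rightarrow> nat set \<Rightarrow> bool" where
  "is_clique n E C \<longleftrightarrow> C \<subseteq> {0..<n} \<and> (\<forall>u\<in>C. \<forall>v\<in>C. u \<noteq> v \<longrightarrow> E u v)"

definition max_clique :: "nat \<Rightarrow> (nat \<Rightarrow> nat \<Rightarrow> bool) \<Rightarrow> nat set \<Rightarrow> bool" where
  "max_clique n E C \<longleftrightarrow> is_clique n E C \<and> (\<forall>D. is_clique n E D \<longrightarrow> card D \<le> card C)"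

definition boundary_edges :: "nat \<Rightarrow> (nat \<Rightarrow> nat \<Rightarrow> bool) \<Rightarrow> nat set \<Rightarrow> nat" where
  "boundary_edges n E C = card {(u, v). u \<in> C \<and> v \<in> {0..<n} - C \<and> E u v}"

definition nbrs_in :: "(nat \<Rightarrow> nat \<Rightarrow> bool) \<Rightarrow> nat \<Rightarrow> nat set \<Rightarrow> nat set" where
  "nbrs_in E v S = {u \<in> S. E v u}"

definition Gamma :: "nat \<Rightarrow> (nat \<Rightarrow> nat \<Rightarrow> bool) \<Rightarrow> nat set \<Rightarrow> nat set \<Rightarrow> nat set" where
  "Gamma n E C X = {v \<in> {0..<n} - C. nbrs_in E v C = X}"

text \<open>The induced subgraph G[S] is isomorphic to l K1 \<union> k K2 \<union> m K3: S is partitioned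
  into l blocks of size 1, k of size 2 and m of size 3, each block a clique,
  no edges between distinct blocks.\<close>
definition is_lK1_kK2_mK3 ::
  "(nat \<Rightarrow> nat \<Rightarrow> bool) \<Rightarrow> nat set \<Rightarrow> nat \<Rightarrow> nat \<Rightarrow> nat \<Rightarrow> bool" where
  "is_lK1_kK2_mK3 E S l k m \<longleftrightarrow>
     (\<exists>P. finite P \<and> \<Union>P = S \<and> (\<forall>B\<in>P. \<forall>B'\<in>P. B \<noteq> B' \<longrightarrow> B \<inter> B' = {}) \<and>
        (\<forall>B\<in>P. card B \<in> {1, 2, 3} \<and> (\<forall>u\<in>B. \<forall>v\<in>B. u \<noteq> v \<longrightarrow> E u v)) \<and>
        (\<forall>B\<in>P. \<forall>B'\<in>P. B \<noteq> B' \<longrightarrow> (\<forall>u\<in>B. \<forall>v\<in>B'. \<not> E u v)) \<and>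
        card {B\<in>P. card B = 1} = l \<and> card {B\<in>P. card B = 2} = k \<and>
        card {B\<in>P. card B = 3} = m)"

end

theory Submission
  imports Defs "Jordan_Normal_Form.Schur_Decomposition"
begin

(* Every vertex of Gamma X is adjacent to all of X and to nothing in Y; fix x in X and y in Y.
   An induced path a - b - c in G[Gamma X] would make a, b, c, x, y induce a dart, and a triangle
   a b c in G[Gamma X] together with x and four vertices of Y would induce a K4 and a K5 sharing
   the vertex x. Both configurations are excluded by interlacing: the form of A + I is negative
   definite on a plane of vectors supported on the dart, and the form of A - 2 I is positive
   definite on the span of the indicator vectors of the K5 and the K4, whereas the adjacency
   matrix A has only one eigenvalue below -1 and only one above 2. Hence G[Gamma X] is a disjoint
   union of cliques; each has at most |Y| vertices, since together with X it forms a clique and C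
   is maximum, and at most two vertices when |Y| >= 4. *)

section \<open>Products of shifted matrices\<close>

definition shift_mult_vec :: "'a :: field mat \<Rightarrow> 'a \<Rightarrow> 'a vec \<Rightarrow> 'a vec" where
  "shift_mult_vec A e v = A *\<^sub>v v - e \<cdot>\<^sub>v v"

lemma shift_mult_vec_carrier [simp]:
  "A \<in> carrier_mat n n \<Longrightarrow> v \<in> carrier_vec n \<Longrightarrow> shift_mult_vec A e v \<in> carrier_vec n"
  unfolding shift_mult_vec_def by simp

lemma dim_shift_mult_vec [simp]: "dim_vec (shift_mult_vec A e v) = dim_vec v"
  unfolding shift_mult_vec_def by simp

lemma foldr_shift_mult_vec_carrier [simp]:
  "A \<in> carrier_mat n n \<Longrightarrow> v \<in> carrier_vec n \<Longrightarrow> foldr (shift_mult_vec A) es v \<in> carrier_vec n"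
  by (induction es) simp_all

lemma index_shift_mult_vec:
  "A \<in> carrier_mat n n \<Longrightarrow> v \<in> carrier_vec n \<Longrightarrow> i < n \<Longrightarrow>
    shift_mult_vec A e v $ i = (\<Sum>j<n. A $$ (i, j) * v $ j) - e * v $ i"
  unfolding shift_mult_vec_def by (simp add: scalar_prod_def row_def lessThan_atLeast0 mult.commute)

lemma shift_mult_vec_comm:
  assumes "A \<in> carrier_mat n n" "v \<in> carrier_vec n"
  shows "shift_mult_vec A e (shift_mult_vec A f v) = shift_mult_vec A f (shift_mult_vec A e v)"
  using assms unfolding shift_mult_vec_def
  by (intro eq_vecI) (simp_all add: mult_mat_vec algebra_simps)

lemma funpow_shift_mult_vec_carrier [simp]:
  "A \<in> carrier_mat n n \<Longrightarrow> v \<in> carrier_vec n \<Longrightarrow> (shift_mult_vec A e ^^ k) v \<in> carrier_vec n"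
  by (induction k) simp_all

lemma funpow_shift_mult_vec_comm:
  "A \<in> carrier_mat n n \<Longrightarrow> v \<in> carrier_vec n \<Longrightarrow>
    shift_mult_vec A e ((shift_mult_vec A f ^^ k) v) = (shift_mult_vec A f ^^ k) (shift_mult_vec A e v)"
proof (induction k)
  case (Suc k)
  then show ?case
    using shift_mult_vec_comm[of A n "(shift_mult_vec A f ^^ k) v" e f] by simp
qed simp

lemma shift_mult_vec_similar:
  assumes P: "P \<in> carrier_mat n n" and B: "B \<in> carrier_mat n n" and Q: "Q \<in> carrier_mat n n"
    and QP: "Q * P = 1\<^sub>m n" and A: "A = P * B * Q" and w: "w \<in> carrier_vec n"
  shows "shift_mult_vec A e (P *\<^sub>v w) = P *\<^sub>v shift_mult_vec B e w"
proof -
  have "Q *\<^sub>v (P *\<^sub>v w) = w"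
    using assms by (metis assoc_mult_mat_vec one_mult_mat_vec)
  then have "A *\<^sub>v (P *\<^sub>v w) = P *\<^sub>v (B *\<^sub>v w)"
    using assms by (simp add: assoc_mult_mat_vec[of _ n n _ n])
  then show ?thesis
    using assms by (simp add: shift_mult_vec_def mult_minus_distrib_mat_vec mult_mat_vec[OF P w])
qed

lemma foldr_shift_mult_vec_similar:
  assumes "P \<in> carrier_mat n n" "B \<in> carrier_mat n n" "Q \<in> carrier_mat n n"
    and "Q * P = 1\<^sub>m n" "A = P * B * Q" "w \<in> carrier_vec n"
  shows "foldr (shift_mult_vec A) es (P *\<^sub>v w) = P *\<^sub>v foldr (shift_mult_vec B) es w"
proof (induction es)
  case (Cons e es)
  then show ?case
    using shift_mult_vec_similar[OF assms(1-5), of "foldr (shift_mult_vec B) es w" e] assms(2,6)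
    by simp
qed simp

lemma upper_triangular_shift_mult_vec:
  assumes B: "B \<in> carrier_mat n n" "upper_triangular B" and w: "w \<in> carrier_vec n"
    and j: "m \<le> j" "j < n" and w0: "\<And>k. m < k \<Longrightarrow> k < n \<Longrightarrow> w $ k = 0"
  shows "shift_mult_vec B (B $$ (m, m)) w $ j = 0"
proof -
  have "(\<Sum>k<n. B $$ (j, k) * w $ k) = (\<Sum>k<n. if k = j then B $$ (j, j) * w $ j else 0)"
  proof (intro sum.cong refl)
    fix k assume "k \<in> {..<n}"
    show "B $$ (j, k) * w $ k = (if k = j then B $$ (j, j) * w $ j else 0)"
      using B j w0[of k] \<open>k \<in> {..<n}\<close> unfolding upper_triangular_def
      by (cases k j rule: linorder_cases) auto
  qed
  then have "shift_mult_vec B (B $$ (m, m)) w $ j = (B $$ (j, j) - B $$ (m, m)) * w $ j"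
    using B w j by (simp add: index_shift_mult_vec algebra_simps)
  then show ?thesis
    using w0[of j] j by (cases "j = m") auto
qed

lemma upper_triangular_foldr_shift_mult_vec:
  assumes B: "B \<in> carrier_mat n n" "upper_triangular B"
  shows "m \<le> n \<Longrightarrow> w \<in> carrier_vec n \<Longrightarrow> (\<And>j. m \<le> j \<Longrightarrow> j < n \<Longrightarrow> w $ j = 0) \<Longrightarrow>
    foldr (shift_mult_vec B) (take m (diag_mat B)) w = 0\<^sub>v n"
proof (induction m arbitrary: w)
  case 0
  then show ?case by (intro eq_vecI) auto
next
  case (Suc m)
  have "take (Suc m) (diag_mat B) = take m (diag_mat B) @ [B $$ (m, m)]"
    using B Suc.prems(1) by (simp add: take_Suc_conv_app_nth diag_mat_def)
  moreover have "shift_mult_vec B (B $$ (m, m)) w $ j = 0" if "m \<le> j" "j < n" for j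
    using upper_triangular_shift_mult_vec[OF B Suc.prems(2) that] Suc.prems(3) by simp
  ultimately show ?case
    using Suc.IH[of "shift_mult_vec B (B $$ (m, m)) w"] B Suc.prems by simp
qed

(* Triangularise A with mu as the last diagonal entry: the factors for es then annihilate every
   vector whose image under the inverse transformation has last coordinate 0. *)
lemma foldr_shift_mult_vec_hyperplane_kernel:
  fixes A :: "'a :: conjugatable_ordered_field mat"
  assumes A: "A \<in> carrier_mat n n" and cp: "char_poly A = (\<Prod>e \<leftarrow> es @ [\<mu>]. [:- e, 1:])"
  obtains q where "q \<in> carrier_vec n"
    and "\<And>z. z \<in> carrier_vec n \<Longrightarrow> q \<bullet> z = 0 \<Longrightarrow> foldr (shift_mult_vec A) es z = 0\<^sub>v n"
proof -
  obtain B P Q where "schur_decomposition A (es @ [\<mu>]) = (B, P, Q)"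
    by (cases "schur_decomposition A (es @ [\<mu>])")
  from schur_decomposition[OF A cp this]
  have sim: "similar_mat_wit A B P Q" and B: "upper_triangular B" and diag: "diag_mat B = es @ [\<mu>]"
    by auto
  from similar_mat_witD2[OF A sim]
  have carr: "P \<in> carrier_mat n n" "B \<in> carrier_mat n n" "Q \<in> carrier_mat n n"
    and PQ: "P * Q = 1\<^sub>m n" and QP: "Q * P = 1\<^sub>m n" and APBQ: "A = P * B * Q"
    by auto
  have n: "n = Suc (length es)"
  proof -
    have "length (diag_mat B) = n" using carr(2) by (simp add: diag_mat_def)
    then show ?thesis using diag by simp
  qed
  have take: "take (n - 1) (diag_mat B) = es"
    using diag n by simp
  show ?thesis
  proof
    show "row Q (n - 1) \<in> carrier_vec n" using carr(3) by (simp add: row_def)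
  next
    fix z :: "'a vec" assume z: "z \<in> carrier_vec n" and qz: "row Q (n - 1) \<bullet> z = 0"
    define w where "w = Q *\<^sub>v z"
    have w: "w \<in> carrier_vec n" using carr z unfolding w_def by simp
    have zPw: "z = P *\<^sub>v w"
      using carr z PQ unfolding w_def by (metis assoc_mult_mat_vec one_mult_mat_vec)
    have "w $ j = 0" if "n - 1 \<le> j" "j < n" for j
    proof -
      have "j = n - 1" using that by simp
      then show ?thesis using that qz carr(3) unfolding w_def by simp
    qed
    then have "foldr (shift_mult_vec B) es w = 0\<^sub>v n"
      using upper_triangular_foldr_shift_mult_vec[OF carr(2) B _ w, of "n - 1"] take by simp
    moreover have "P *\<^sub>v 0\<^sub>v n = 0\<^sub>v n"
      using carr(1) by (intro eq_vecI) (auto simp: row_def)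
    ultimately show "foldr (shift_mult_vec A) es z = 0\<^sub>v n"
      using foldr_shift_mult_vec_similar[OF carr QP APBQ w] zPw by simp
  qed
qed

lemma shift_mult_vec_smult:
  "A \<in> carrier_mat n n \<Longrightarrow> v \<in> carrier_vec n \<Longrightarrow>
    shift_mult_vec A e (c \<cdot>\<^sub>v v) = c \<cdot>\<^sub>v shift_mult_vec A e v"
  unfolding shift_mult_vec_def by (intro eq_vecI) (simp_all add: mult_mat_vec algebra_simps)

lemma shift_mult_vec_add:
  "A \<in> carrier_mat n n \<Longrightarrow> v \<in> carrier_vec n \<Longrightarrow> w \<in> carrier_vec n \<Longrightarrow>
    shift_mult_vec A e (v + w) = shift_mult_vec A e v + shift_mult_vec A e w"
  unfolding shift_mult_vec_def by (intro eq_vecI) (simp_all add: mult_add_distrib_mat_vec algebra_simps)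

lemma shift_mult_vec_change_shift:
  "A \<in> carrier_mat n n \<Longrightarrow> v \<in> carrier_vec n \<Longrightarrow>
    shift_mult_vec A e v = shift_mult_vec A f v + (f - e) \<cdot>\<^sub>v v"
  unfolding shift_mult_vec_def by (intro eq_vecI) (simp_all add: algebra_simps)

lemma shift_mult_vec_shift_mult_vec:
  "A \<in> carrier_mat n n \<Longrightarrow> v \<in> carrier_vec n \<Longrightarrow>
    shift_mult_vec A e (shift_mult_vec A f v) = A *\<^sub>v (A *\<^sub>v v) - (e + f) \<cdot>\<^sub>v (A *\<^sub>v v) + (e * f) \<cdot>\<^sub>v v"
  unfolding shift_mult_vec_def by (intro eq_vecI) (simp_all add: mult_mat_vec algebra_simps)

section \<open>Real symmetric matrices\<close>

lemma shift_mult_vec_symmetric: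
  assumes "A \<in> carrier_mat n n" "A\<^sup>T = A" "v \<in> carrier_vec n" "w \<in> carrier_vec n"
  shows "v \<bullet> shift_mult_vec A e w = shift_mult_vec A e v \<bullet> w"
  using assms transpose_vec_mult_scalar[of A n n w v]
    minus_scalar_prod_distrib[of "A *\<^sub>v v" n "e \<cdot>\<^sub>v v" w]
    scalar_prod_minus_distrib[of v n "A *\<^sub>v w" "e \<cdot>\<^sub>v w"]
  by (simp add: shift_mult_vec_def)

lemma shift_mult_vec_square_eq_0:
  fixes A :: "real mat"
  assumes A: "A \<in> carrier_mat n n" "A\<^sup>T = A" and v: "v \<in> carrier_vec n"
    and "shift_mult_vec A e (shift_mult_vec A e v) = 0\<^sub>v n"
  shows "shift_mult_vec A e v = 0\<^sub>v n"
proof -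
  let ?y = "shift_mult_vec A e v"
  have "?y \<bullet> ?y = v \<bullet> shift_mult_vec A e ?y"
    using shift_mult_vec_symmetric[OF A v, of ?y e] A v by simp
  also have "\<dots> = 0" using assms v by simp
  finally have "?y \<bullet>c ?y = 0"
    by (simp add: scalar_prod_def)
  then show ?thesis
    using conjugate_square_eq_0_vec[of ?y n] A v by simp
qed

lemma funpow_shift_mult_vec_eq_0:
  fixes A :: "real mat"
  assumes A: "A \<in> carrier_mat n n" "A\<^sup>T = A"
  shows "v \<in> carrier_vec n \<Longrightarrow> (shift_mult_vec A e ^^ k) v = 0\<^sub>v n \<Longrightarrow>
    shift_mult_vec A e v = 0\<^sub>v n"
proof (induction k arbitrary: v)
  case 0
  then show ?case using A by (intro eq_vecI) (simp_all add: index_shift_mult_vec)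
next
  case (Suc k)
  have "(shift_mult_vec A e ^^ k) (shift_mult_vec A e v) = 0\<^sub>v n"
    using Suc.prems by (simp add: funpow_swap1)
  then show ?case
    using Suc.IH[of "shift_mult_vec A e v"] shift_mult_vec_square_eq_0[OF A Suc.prems(1)] A Suc.prems(1)
    by simp
qed

lemma shift_mult_vec_eigenvectors_orthogonal:
  assumes A: "A \<in> carrier_mat n n" "A\<^sup>T = A" and uv: "u \<in> carrier_vec n" "v \<in> carrier_vec n"
    and "shift_mult_vec A a u = 0\<^sub>v n" "shift_mult_vec A b v = 0\<^sub>v n" "a \<noteq> b"
  shows "u \<bullet> v = 0"
proof -
  have "0 = shift_mult_vec A a u \<bullet> v" using assms by simp
  also have "\<dots> = u \<bullet> shift_mult_vec A a v" using shift_mult_vec_symmetric[OF A uv] ..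
  also have "\<dots> = (b - a) * (u \<bullet> v)"
    using assms shift_mult_vec_change_shift[OF A(1) uv(2), of a b] by simp
  finally show ?thesis using \<open>a \<noteq> b\<close> by simp
qed

lemma lagrange_interpolation_3:
  fixes l1 l2 l3 p q r :: real
  assumes "l1 \<noteq> l2" "l1 \<noteq> l3" "l2 \<noteq> l3"
  shows "r = (p - (l2 + l3) * q + l2 * l3 * r) / ((l1 - l2) * (l1 - l3))
           + (p - (l1 + l3) * q + l1 * l3 * r) / ((l2 - l1) * (l2 - l3))
           + (p - (l1 + l2) * q + l1 * l2 * r) / ((l3 - l1) * (l3 - l2))"
  using assms by (simp add: divide_simps) (simp add: algebra_simps)

lemma symmetric_three_root_form:
  fixes A :: "real mat"
  assumes A: "A \<in> carrier_mat n n" "A\<^sup>T = A" and z: "z \<in> carrier_vec n"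
    and l: "l1 \<noteq> l2" "l1 \<noteq> l3" "l2 \<noteq> l3"
    and kill: "shift_mult_vec A l1 (shift_mult_vec A l2 (shift_mult_vec A l3 z)) = 0\<^sub>v n"
  obtains a1 a2 a3 where "z \<bullet> shift_mult_vec A t z =
    (l1 - t) * (a1 \<bullet> a1) + (l2 - t) * (a2 \<bullet> a2) + (l3 - t) * (a3 \<bullet> a3)"
proof -
  let ?S = "shift_mult_vec A"
  define a1 where "a1 = (1 / ((l1 - l2) * (l1 - l3))) \<cdot>\<^sub>v ?S l2 (?S l3 z)"
  define a2 where "a2 = (1 / ((l2 - l1) * (l2 - l3))) \<cdot>\<^sub>v ?S l1 (?S l3 z)"
  define a3 where "a3 = (1 / ((l3 - l1) * (l3 - l2))) \<cdot>\<^sub>v ?S l1 (?S l2 z)"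
  have carr: "a1 \<in> carrier_vec n" "a2 \<in> carrier_vec n" "a3 \<in> carrier_vec n"
    using A z unfolding a1_def a2_def a3_def by simp_all
  have z_sum: "z = a1 + a2 + a3"
    using A z lagrange_interpolation_3[OF l]
    unfolding a1_def a2_def a3_def by (intro eq_vecI) (simp_all add: shift_mult_vec_shift_mult_vec)
  have comm: "?S e (?S f v) = ?S f (?S e v)" if "v \<in> carrier_vec n" for e f v
    using shift_mult_vec_comm[OF A(1) that] .
  have "?S l2 (?S l1 (?S l3 z)) = 0\<^sub>v n" "?S l3 (?S l1 (?S l2 z)) = 0\<^sub>v n"
    using kill comm[of "?S l3 z" l2 l1] comm[of "?S l2 z" l3 l1] comm[of z l3 l2] A z by simp_all
  moreover have smult_kill: "?S e (c \<cdot>\<^sub>v v) = 0\<^sub>v n" if "v \<in> carrier_vec n" "?S e v = 0\<^sub>v n" for e c v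
    using shift_mult_vec_smult[OF A(1) that(1)] that(2) by (intro eq_vecI) auto
  ultimately have eigen: "?S l1 a1 = 0\<^sub>v n" "?S l2 a2 = 0\<^sub>v n" "?S l3 a3 = 0\<^sub>v n"
    using A z kill unfolding a1_def a2_def a3_def by (simp_all add: smult_kill)
  have orth: "a1 \<bullet> a2 = 0" "a1 \<bullet> a3 = 0" "a2 \<bullet> a3 = 0"
    using shift_mult_vec_eigenvectors_orthogonal[OF A] carr eigen l by blast+
  have eigen_shift: "?S t a = (l - t) \<cdot>\<^sub>v a" if "a \<in> carrier_vec n" "?S l a = 0\<^sub>v n" for a l
    using shift_mult_vec_change_shift[OF A(1) that(1), of t l] that by simp
  have "?S t z = (l1 - t) \<cdot>\<^sub>v a1 + (l2 - t) \<cdot>\<^sub>v a2 + (l3 - t) \<cdot>\<^sub>v a3"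
    using A carr eigen unfolding z_sum by (simp add: shift_mult_vec_add eigen_shift)
  then have "z \<bullet> ?S t z = (l1 - t) * (a1 \<bullet> a1) + (l2 - t) * (a2 \<bullet> a2) + (l3 - t) * (a3 \<bullet> a3)"
    using carr orth unfolding z_sum
    by (simp add: add_scalar_prod_distrib scalar_prod_add_distrib comm_scalar_prod[of a2 n a1]
        comm_scalar_prod[of a3 n a1] comm_scalar_prod[of a3 n a2])
  then show ?thesis ..
qed

lemma exists_nontrivial_combination_orthogonal:
  fixes q z1 z2 :: "'a :: field vec"
  assumes "q \<in> carrier_vec n" "z1 \<in> carrier_vec n" "z2 \<in> carrier_vec n"
  obtains \<alpha> \<beta> where "\<alpha> \<noteq> 0 \<or> \<beta> \<noteq> 0" "q \<bullet> (\<alpha> \<cdot>\<^sub>v z1 + \<beta> \<cdot>\<^sub>v z2) = 0"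
proof -
  have comb: "q \<bullet> (\<alpha> \<cdot>\<^sub>v z1 + \<beta> \<cdot>\<^sub>v z2) = \<alpha> * (q \<bullet> z1) + \<beta> * (q \<bullet> z2)" for \<alpha> \<beta>
    using assms by (simp add: scalar_prod_add_distrib[of q n])
  show ?thesis
  proof (cases "q \<bullet> z2 = 0")
    case True
    then show ?thesis using that[of 0 1] comb[of 0 1] by simp
  next
    case False
    then show ?thesis using that[of "q \<bullet> z2" "- (q \<bullet> z1)"] comb by (simp add: algebra_simps)
  qed
qed

lemma symmetric_pencil_form:
  fixes A :: "real mat"
  assumes A: "A \<in> carrier_mat n n" "A\<^sup>T = A"
    and cp: "char_poly A = (\<Prod>e \<leftarrow> replicate b l1 @ replicate c l2 @ [l3, \<mu>]. [:- e, 1:])"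
    and l: "l1 \<noteq> l2" "l1 \<noteq> l3" "l2 \<noteq> l3"
    and z12: "z1 \<in> carrier_vec n" "z2 \<in> carrier_vec n"
  obtains \<alpha> \<beta> a1 a2 a3 where "\<alpha> \<noteq> 0 \<or> \<beta> \<noteq> 0"
    and "(\<alpha> \<cdot>\<^sub>v z1 + \<beta> \<cdot>\<^sub>v z2) \<bullet> shift_mult_vec A t (\<alpha> \<cdot>\<^sub>v z1 + \<beta> \<cdot>\<^sub>v z2) =
      (l1 - t) * (a1 \<bullet> a1) + (l2 - t) * (a2 \<bullet> a2) + (l3 - t) * (a3 \<bullet> a3)"
proof -
  let ?S = "shift_mult_vec A"
  have "char_poly A = (\<Prod>e \<leftarrow> (replicate b l1 @ replicate c l2 @ [l3]) @ [\<mu>]. [:- e, 1:])"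
    using cp by simp
  then obtain q where q: "q \<in> carrier_vec n"
    and kill: "\<And>z. z \<in> carrier_vec n \<Longrightarrow> q \<bullet> z = 0 \<Longrightarrow>
      foldr ?S (replicate b l1 @ replicate c l2 @ [l3]) z = 0\<^sub>v n"
    using foldr_shift_mult_vec_hyperplane_kernel[OF A(1)] by blast
  obtain \<alpha> \<beta> where \<alpha>\<beta>: "\<alpha> \<noteq> 0 \<or> \<beta> \<noteq> 0" and qz: "q \<bullet> (\<alpha> \<cdot>\<^sub>v z1 + \<beta> \<cdot>\<^sub>v z2) = 0"
    using exists_nontrivial_combination_orthogonal[OF q z12] .
  define z where "z = \<alpha> \<cdot>\<^sub>v z1 + \<beta> \<cdot>\<^sub>v z2"
  have z: "z \<in> carrier_vec n" using z12 unfolding z_def by simp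
  have "(?S l1 ^^ b) ((?S l2 ^^ c) (?S l3 z)) = 0\<^sub>v n"
    using kill[OF z qz[folded z_def]] by simp
  then have "?S l1 ((?S l2 ^^ c) (?S l3 z)) = 0\<^sub>v n"
    using funpow_shift_mult_vec_eq_0[OF A] A z by simp
  then have "(?S l2 ^^ c) (?S l1 (?S l3 z)) = 0\<^sub>v n"
    using funpow_shift_mult_vec_comm[OF A(1)] A z by simp
  then have "?S l2 (?S l1 (?S l3 z)) = 0\<^sub>v n"
    using funpow_shift_mult_vec_eq_0[OF A] A z by simp
  then have "?S l1 (?S l2 (?S l3 z)) = 0\<^sub>v n"
    using shift_mult_vec_comm[OF A(1)] A z by simp
  then obtain a1 a2 a3 where "z \<bullet> ?S t z =
      (l1 - t) * (a1 \<bullet> a1) + (l2 - t) * (a2 \<bullet> a2) + (l3 - t) * (a3 \<bullet> a3)"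
    using symmetric_three_root_form[OF A z l] by blast
  then show ?thesis using that \<alpha>\<beta> unfolding z_def by blast
qed

section \<open>Quadratic forms of graphs in F\<close>

lemma in_F_simple_graph: "in_F n E \<Longrightarrow> simple_graph n E"
  unfolding in_F_def by simp

lemma simple_graph_sym: "simple_graph n E \<Longrightarrow> E a b \<Longrightarrow> E b a"
  unfolding simple_graph_def by blast

lemma simple_graph_non_sym: "simple_graph n E \<Longrightarrow> \<not> E a b \<Longrightarrow> \<not> E b a"
  unfolding simple_graph_def by blast

lemma simple_graph_irrefl: "simple_graph n E \<Longrightarrow> \<not> E a a"
  unfolding simple_graph_def by blast

lemma adj_matrix_carrier [simp]: "adj_matrix n E \<in> carrier_mat n n"
  unfolding adj_matrix_def by simp

lemma adj_matrix_symmetric: "simple_graph n E \<Longrightarrow> (adj_matrix n E)\<^sup>T = adj_matrix n E"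
  unfolding adj_matrix_def simple_graph_def by (intro eq_matI) auto

lemma in_F_char_poly:
  assumes "in_F n E"
  obtains r s b c where "r > 2" "s < -1"
    and "\<And>l \<mu>. {#l, \<mu>#} = {#r, s#} \<Longrightarrow>
      char_poly (adj_matrix n E) = (\<Prod>e \<leftarrow> replicate b 2 @ replicate c (-1) @ [l, \<mu>]. [:- e, 1:])"
proof -
  obtain r s M where rs: "r > 2" "s < -1" and M: "set_mset M \<subseteq> {2, -1}"
    and cp: "char_poly (adj_matrix n E) = (\<Prod>e \<in># {#r, s#} + M. [:- e, 1:])"
    using assms unfolding in_F_def has_spectrum_def by blast
  have "M = replicate_mset (count M 2) 2 + replicate_mset (count M (-1)) (-1)"
  proof (rule multiset_eqI)
    fix x
    show "count M x = count (replicate_mset (count M 2) 2 + replicate_mset (count M (-1)) (-1)) x"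
      using M by (cases "x = 2 \<or> x = -1") (auto simp: count_eq_zero_iff)
  qed
  then have mset_eq: "mset (replicate (count M 2) 2 @ replicate (count M (-1)) (-1) @ [l, \<mu>]) = {#r, s#} + M"
    if "{#l, \<mu>#} = {#r, s#}" for l \<mu> :: real
    using that by (simp add: ac_simps)
  have prod_list_mset: "(\<Prod>e \<leftarrow> es. [:- e, 1:]) = (\<Prod>e \<in># mset es. [:- e, 1:])" for es :: "real list"
    by (simp flip: prod_mset_prod_list)
  have "char_poly (adj_matrix n E) =
      (\<Prod>e \<leftarrow> replicate (count M 2) 2 @ replicate (count M (-1)) (-1) @ [l, \<mu>]. [:- e, 1:])"
    if "{#l, \<mu>#} = {#r, s#}" for l \<mu>
    unfolding prod_list_mset mset_eq[OF that] by (rule cp)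
  with rs show ?thesis by (rule that)
qed

lemma scalar_prod_self_nonneg: "0 \<le> v \<bullet> (v :: real vec)"
  unfolding scalar_prod_def by (intro sum_nonneg) simp

lemma in_F_pencil_form_nonneg:
  assumes F: "in_F n E" and z12: "z1 \<in> carrier_vec n" "z2 \<in> carrier_vec n"
  obtains \<alpha> \<beta> where "\<alpha> \<noteq> 0 \<or> \<beta> \<noteq> 0"
    and "0 \<le> (\<alpha> \<cdot>\<^sub>v z1 + \<beta> \<cdot>\<^sub>v z2) \<bullet> shift_mult_vec (adj_matrix n E) (-1) (\<alpha> \<cdot>\<^sub>v z1 + \<beta> \<cdot>\<^sub>v z2)"
proof -
  have A: "adj_matrix n E \<in> carrier_mat n n" "(adj_matrix n E)\<^sup>T = adj_matrix n E"
    using adj_matrix_symmetric[OF in_F_simple_graph[OF F]] by simp_all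
  obtain r s b c where rs: "r > 2" "s < -1"
    and cp: "\<And>l \<mu>. {#l, \<mu>#} = {#r, s#} \<Longrightarrow>
      char_poly (adj_matrix n E) = (\<Prod>e \<leftarrow> replicate b 2 @ replicate c (-1) @ [l, \<mu>]. [:- e, 1:])"
    using in_F_char_poly[OF F] by metis
  obtain \<alpha> \<beta> a1 a2 a3 where "\<alpha> \<noteq> 0 \<or> \<beta> \<noteq> 0"
    and "(\<alpha> \<cdot>\<^sub>v z1 + \<beta> \<cdot>\<^sub>v z2) \<bullet> shift_mult_vec (adj_matrix n E) (-1) (\<alpha> \<cdot>\<^sub>v z1 + \<beta> \<cdot>\<^sub>v z2) =
      (2 - -1) * (a1 \<bullet> a1) + (-1 - -1) * (a2 \<bullet> a2) + (r - -1) * (a3 \<bullet> a3)"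
    by (rule symmetric_pencil_form[OF A cp[of r s] _ _ _ z12, where t = "-1"]) (use rs in auto)
  moreover have "0 \<le> (2 - -1) * (a1 \<bullet> a1) + (-1 - -1) * (a2 \<bullet> a2) + (r - -1) * (a3 \<bullet> a3)"
    using rs scalar_prod_self_nonneg[of a1] scalar_prod_self_nonneg[of a3] by simp
  ultimately show ?thesis using that by simp
qed

lemma in_F_pencil_form_nonpos:
  assumes F: "in_F n E" and z12: "z1 \<in> carrier_vec n" "z2 \<in> carrier_vec n"
  obtains \<alpha> \<beta> where "\<alpha> \<noteq> 0 \<or> \<beta> \<noteq> 0"
    and "(\<alpha> \<cdot>\<^sub>v z1 + \<beta> \<cdot>\<^sub>v z2) \<bullet> shift_mult_vec (adj_matrix n E) 2 (\<alpha> \<cdot>\<^sub>v z1 + \<beta> \<cdot>\<^sub>v z2) \<le> 0"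
proof -
  have A: "adj_matrix n E \<in> carrier_mat n n" "(adj_matrix n E)\<^sup>T = adj_matrix n E"
    using adj_matrix_symmetric[OF in_F_simple_graph[OF F]] by simp_all
  obtain r s b c where rs: "r > 2" "s < -1"
    and cp: "\<And>l \<mu>. {#l, \<mu>#} = {#r, s#} \<Longrightarrow>
      char_poly (adj_matrix n E) = (\<Prod>e \<leftarrow> replicate b 2 @ replicate c (-1) @ [l, \<mu>]. [:- e, 1:])"
    using in_F_char_poly[OF F] by metis
  obtain \<alpha> \<beta> a1 a2 a3 where "\<alpha> \<noteq> 0 \<or> \<beta> \<noteq> 0"
    and "(\<alpha> \<cdot>\<^sub>v z1 + \<beta> \<cdot>\<^sub>v z2) \<bullet> shift_mult_vec (adj_matrix n E) 2 (\<alpha> \<cdot>\<^sub>v z1 + \<beta> \<cdot>\<^sub>v z2) =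
      (2 - 2) * (a1 \<bullet> a1) + (-1 - 2) * (a2 \<bullet> a2) + (s - 2) * (a3 \<bullet> a3)"
    by (rule symmetric_pencil_form[OF A cp[of s r] _ _ _ z12, where t = 2]) (use rs in \<open>auto simp: add_mset_commute\<close>)
  moreover have "(s - 2) * (a3 \<bullet> a3) \<le> 0"
    using rs scalar_prod_self_nonneg[of a3] by (simp add: mult_nonpos_nonneg)
  ultimately show ?thesis
    using that scalar_prod_self_nonneg[of a2] by simp
qed

lemma smult_vec_add_smult_vec:
  "\<alpha> \<cdot>\<^sub>v vec n f + \<beta> \<cdot>\<^sub>v vec n g = vec n (\<lambda>i. \<alpha> * f i + \<beta> * g i)"
  by (intro eq_vecI) auto

lemma adj_matrix_form_supported:
  assumes S: "S \<subseteq> {..<n}" and f: "\<And>i. i \<notin> S \<Longrightarrow> f i = 0"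
  shows "vec n f \<bullet> shift_mult_vec (adj_matrix n E) t (vec n f) =
    (\<Sum>i\<in>S. \<Sum>j\<in>S. if E i j then f i * f j else 0) - t * (\<Sum>i\<in>S. f i * f i)"
proof -
  have fin: "finite S" using S finite_subset by blast
  have row: "(\<Sum>j<n. adj_matrix n E $$ (i, j) * f j) = (\<Sum>j\<in>S. if E i j then f j else 0)" if "i < n" for i
    using S f that fin unfolding adj_matrix_def
    by (intro sum.mono_neutral_cong_right) auto
  have idx: "shift_mult_vec (adj_matrix n E) t (vec n f) $ i =
      (\<Sum>j\<in>S. if E i j then f j else 0) - t * f i" if "i < n" for i
    using that by (simp add: index_shift_mult_vec[OF adj_matrix_carrier vec_carrier] row)
  have "vec n f \<bullet> shift_mult_vec (adj_matrix n E) t (vec n f) =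
      (\<Sum>i<n. f i * ((\<Sum>j\<in>S. if E i j then f j else 0) - t * f i))"
    by (auto simp: scalar_prod_def idx lessThan_atLeast0 intro!: sum.cong)
  also have "\<dots> = (\<Sum>i\<in>S. f i * ((\<Sum>j\<in>S. if E i j then f j else 0) - t * f i))"
    using S f fin by (intro sum.mono_neutral_right) auto
  also have "\<dots> = (\<Sum>i\<in>S. \<Sum>j\<in>S. if E i j then f i * f j else 0) - t * (\<Sum>i\<in>S. f i * f i)"
    by (simp add: right_diff_distrib sum_subtractf sum_distrib_left sum_distrib_right if_distrib mult.assoc
        mult.left_commute)
  finally show ?thesis .
qed

lemma dart_adj_form:
  fixes g :: "nat \<Rightarrow> real"
  assumes G: "simple_graph n E" and d: "distinct [u, v, w, x, y]"
    and edges: "E u v" "E v w" "E u x" "E v x" "E w x" "E x y"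
    and non_edges: "\<not> E u w" "\<not> E u y" "\<not> E v y" "\<not> E w y"
    and g: "g u = - \<alpha>" "g v = \<alpha> - \<beta>" "g w = - \<alpha>" "g x = \<beta>" "g y = - \<beta>"
  shows "(\<Sum>i\<in>{u, v, w, x, y}. \<Sum>j\<in>{u, v, w, x, y}. if E i j then g i * g j else 0)
    + (\<Sum>i\<in>{u, v, w, x, y}. g i * g i) = - (\<alpha>\<^sup>2 + \<beta>\<^sup>2)"
proof -
  note adj = edges non_edges edges[THEN simple_graph_sym[OF G]] non_edges[THEN simple_graph_non_sym[OF G]]
    simple_graph_irrefl[OF G]
  show ?thesis using d by (simp add: adj g) (simp add: power2_eq_square algebra_simps)
qed

lemma in_F_no_induced_dart:
  assumes F: "in_F n E"
    and V: "u < n" "v < n" "w < n" "x < n" "y < n" and d: "distinct [u, v, w, x, y]"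
    and edges: "E u v" "E v w" "E u x" "E v x" "E w x" "E x y"
    and non_edges: "\<not> E u w" "\<not> E u y" "\<not> E v y" "\<not> E w y"
  shows False
proof -
  let ?S = "{u, v, w, x, y}"
  define f1 :: "nat \<Rightarrow> real" where "f1 i = (if i = v then 1 else if i = u \<or> i = w then -1 else 0)" for i
  define f2 :: "nat \<Rightarrow> real" where "f2 i = (if i = x then 1 else if i = v \<or> i = y then -1 else 0)" for i
  obtain \<alpha> \<beta> where nz: "\<alpha> \<noteq> 0 \<or> \<beta> \<noteq> 0" and nonneg: "0 \<le> (\<alpha> \<cdot>\<^sub>v vec n f1 + \<beta> \<cdot>\<^sub>v vec n f2) \<bullet>
      shift_mult_vec (adj_matrix n E) (-1) (\<alpha> \<cdot>\<^sub>v vec n f1 + \<beta> \<cdot>\<^sub>v vec n f2)"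
    using in_F_pencil_form_nonneg[OF F vec_carrier vec_carrier] .
  define g where "g i = \<alpha> * f1 i + \<beta> * f2 i" for i
  have "g i = 0" if "i \<notin> ?S" for i
    using that by (simp add: g_def f1_def f2_def)
  moreover have "\<alpha> \<cdot>\<^sub>v vec n f1 + \<beta> \<cdot>\<^sub>v vec n f2 = vec n g"
    unfolding smult_vec_add_smult_vec g_def ..
  moreover have "?S \<subseteq> {..<n}" using V by simp
  ultimately have "(\<alpha> \<cdot>\<^sub>v vec n f1 + \<beta> \<cdot>\<^sub>v vec n f2) \<bullet>
      shift_mult_vec (adj_matrix n E) (-1) (\<alpha> \<cdot>\<^sub>v vec n f1 + \<beta> \<cdot>\<^sub>v vec n f2)
    = (\<Sum>i\<in>?S. \<Sum>j\<in>?S. if E i j then g i * g j else 0) + (\<Sum>i\<in>?S. g i * g i)"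
    using adj_matrix_form_supported[of ?S n g E "-1"] by simp
  also have "\<dots> = - (\<alpha>\<^sup>2 + \<beta>\<^sup>2)"
    using d by (intro dart_adj_form[OF in_F_simple_graph[OF F] d edges non_edges])
      (auto simp: g_def f1_def f2_def)
  finally have "\<alpha>\<^sup>2 + \<beta>\<^sup>2 \<le> 0" using nonneg by simp
  moreover have "0 < \<alpha>\<^sup>2 + \<beta>\<^sup>2" using nz by (simp add: sum_power2_gt_zero_iff)
  ultimately show False by simp
qed

lemma K4_K5_sharing_vertex_adj_form:
  fixes g :: "nat \<Rightarrow> real"
  assumes G: "simple_graph n E"
    and K4: "is_clique n E {u, v, w, x}" and K5: "is_clique n E {x, y1, y2, y3, y4}"
    and non_edges: "\<forall>a\<in>{u, v, w}. \<forall>b\<in>{y1, y2, y3, y4}. \<not> E a b"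
    and d: "distinct [u, v, w, x, y1, y2, y3, y4]"
    and g: "g u = \<beta>" "g v = \<beta>" "g w = \<beta>" "g x = \<alpha> + \<beta>" "g y1 = \<alpha>" "g y2 = \<alpha>" "g y3 = \<alpha>" "g y4 = \<alpha>"
  shows "(\<Sum>i\<in>{u, v, w, x, y1, y2, y3, y4}. \<Sum>j\<in>{u, v, w, x, y1, y2, y3, y4}. if E i j then g i * g j else 0)
    - 2 * (\<Sum>i\<in>{u, v, w, x, y1, y2, y3, y4}. g i * g i) = 10 * \<alpha>\<^sup>2 + 10 * \<alpha> * \<beta> + 4 * \<beta>\<^sup>2"
proof -
  have K4_adj: "a \<in> {u, v, w, x} \<Longrightarrow> b \<in> {u, v, w, x} \<Longrightarrow> a \<noteq> b \<Longrightarrow> E a b" for a b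
    using K4 unfolding is_clique_def by blast
  have K5_adj: "a \<in> {x, y1, y2, y3, y4} \<Longrightarrow> b \<in> {x, y1, y2, y3, y4} \<Longrightarrow> a \<noteq> b \<Longrightarrow> E a b" for a b
    using K5 unfolding is_clique_def by blast
  have K4_edges: "E u v" "E u w" "E u x" "E v w" "E v x" "E w x"
    using d by (intro K4_adj; simp)+
  have K5_edges: "E x y1" "E x y2" "E x y3" "E x y4" "E y1 y2" "E y1 y3" "E y1 y4" "E y2 y3" "E y2 y4" "E y3 y4"
    using d by (intro K5_adj; simp)+
  have cross_non_edges: "\<not> E u y1" "\<not> E u y2" "\<not> E u y3" "\<not> E u y4" "\<not> E v y1" "\<not> E v y2"
    "\<not> E v y3" "\<not> E v y4" "\<not> E w y1" "\<not> E w y2" "\<not> E w y3" "\<not> E w y4"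
    using non_edges by simp_all
  note adj = K4_edges K5_edges cross_non_edges K4_edges[THEN simple_graph_sym[OF G]]
    K5_edges[THEN simple_graph_sym[OF G]] cross_non_edges[THEN simple_graph_non_sym[OF G]]
    simple_graph_irrefl[OF G]
  show ?thesis using d by (simp add: adj g) (simp add: power2_eq_square algebra_simps)
qed

lemma in_F_no_K4_K5_sharing_vertex:
  assumes F: "in_F n E"
    and K4: "is_clique n E {u, v, w, x}" and K5: "is_clique n E {x, y1, y2, y3, y4}"
    and non_edges: "\<forall>a\<in>{u, v, w}. \<forall>b\<in>{y1, y2, y3, y4}. \<not> E a b"
    and d: "distinct [u, v, w, x, y1, y2, y3, y4]"
  shows False
proof -
  let ?S = "{u, v, w, x, y1, y2, y3, y4}"
  define f1 :: "nat \<Rightarrow> real" where "f1 i = (if i \<in> {x, y1, y2, y3, y4} then 1 else 0)" for i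
  define f2 :: "nat \<Rightarrow> real" where "f2 i = (if i \<in> {u, v, w, x} then 1 else 0)" for i
  obtain \<alpha> \<beta> where nz: "\<alpha> \<noteq> 0 \<or> \<beta> \<noteq> 0" and nonpos: "(\<alpha> \<cdot>\<^sub>v vec n f1 + \<beta> \<cdot>\<^sub>v vec n f2) \<bullet>
      shift_mult_vec (adj_matrix n E) 2 (\<alpha> \<cdot>\<^sub>v vec n f1 + \<beta> \<cdot>\<^sub>v vec n f2) \<le> 0"
    using in_F_pencil_form_nonpos[OF F vec_carrier vec_carrier] .
  define g where "g i = \<alpha> * f1 i + \<beta> * f2 i" for i
  have "g i = 0" if "i \<notin> ?S" for i
    using that by (simp add: g_def f1_def f2_def)
  moreover have "\<alpha> \<cdot>\<^sub>v vec n f1 + \<beta> \<cdot>\<^sub>v vec n f2 = vec n g"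
    unfolding smult_vec_add_smult_vec g_def ..
  moreover have "?S \<subseteq> {..<n}" using K4 K5 unfolding is_clique_def by auto
  ultimately have "(\<alpha> \<cdot>\<^sub>v vec n f1 + \<beta> \<cdot>\<^sub>v vec n f2) \<bullet>
      shift_mult_vec (adj_matrix n E) 2 (\<alpha> \<cdot>\<^sub>v vec n f1 + \<beta> \<cdot>\<^sub>v vec n f2)
    = (\<Sum>i\<in>?S. \<Sum>j\<in>?S. if E i j then g i * g j else 0) - 2 * (\<Sum>i\<in>?S. g i * g i)"
    using adj_matrix_form_supported[of ?S n g E 2] by simp
  also have "\<dots> = 10 * \<alpha>\<^sup>2 + 10 * \<alpha> * \<beta> + 4 * \<beta>\<^sup>2"
    using d by (intro K4_K5_sharing_vertex_adj_form[OF in_F_simple_graph[OF F] K4 K5 non_edges d])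
      (auto simp: g_def f1_def f2_def)
  also have "\<dots> = 5 / 2 * (2 * \<alpha> + \<beta>)\<^sup>2 + 3 / 2 * \<beta>\<^sup>2"
    by (simp add: power2_eq_square algebra_simps)
  finally have "5 / 2 * (2 * \<alpha> + \<beta>)\<^sup>2 + 3 / 2 * \<beta>\<^sup>2 \<le> 0" using nonpos by simp
  moreover have "0 < 5 / 2 * (2 * \<alpha> + \<beta>)\<^sup>2 + 3 / 2 * \<beta>\<^sup>2"
    using nz by (cases "\<beta> = 0") (simp_all add: add_nonneg_pos)
  ultimately show False by simp
qed

section \<open>The vertices attached to one part of a maximum clique\<close>

lemma Gamma_adj_iff: "g \<in> Gamma n E C Z \<Longrightarrow> c \<in> C \<Longrightarrow> E g c \<longleftrightarrow> c \<in> Z"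
  unfolding Gamma_def nbrs_in_def by blast

lemma Gamma_subset: "Gamma n E C Z \<subseteq> {0..<n} - C"
  unfolding Gamma_def by blast

lemma Gamma_adj_transitive:
  assumes F: "in_F n E" and C: "is_clique n E C" and Z: "Z \<subseteq> C" "Z \<noteq> {}" "Z \<noteq> C"
    and abc: "a \<in> Gamma n E C Z" "b \<in> Gamma n E C Z" "c \<in> Gamma n E C Z"
    and edges: "E a b" "E b c" and "a \<noteq> c"
  shows "E a c"
proof (rule ccontr)
  assume "\<not> E a c"
  obtain x y where x: "x \<in> Z" and y: "y \<in> C" "y \<notin> Z" using Z by blast
  have xy: "x \<in> C" "x \<noteq> y" using x y Z by auto
  have "a \<noteq> b" "b \<noteq> c" using edges simple_graph_irrefl[OF in_F_simple_graph[OF F]] by auto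
  moreover have "a \<notin> C" "b \<notin> C" "c \<notin> C" and V: "a < n" "b < n" "c < n"
    using abc Gamma_subset[of n E C Z] by auto
  ultimately have d: "distinct [a, b, c, x, y]"
    using xy y \<open>a \<noteq> c\<close> by auto
  have Vxy: "x < n" "y < n" and "E x y" using xy y C unfolding is_clique_def by auto
  moreover have "E a x" "E b x" "E c x" "\<not> E a y" "\<not> E b y" "\<not> E c y"
    using abc xy x y by (simp_all add: Gamma_adj_iff)
  ultimately show False
    using in_F_no_induced_dart[OF F V Vxy d edges] \<open>\<not> E a c\<close> by blast
qed

lemma Gamma_triangle_free:
  assumes F: "in_F n E" and C: "is_clique n E C" and Z: "Z \<subseteq> C" "Z \<noteq> {}"
    and W: "card (C - Z) \<ge> 4"
    and abc: "a \<in> Gamma n E C Z" "b \<in> Gamma n E C Z" "c \<in> Gamma n E C Z"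
    and "a \<noteq> b" "a \<noteq> c" "b \<noteq> c" and edges: "E a b" "E a c" "E b c"
  shows False
proof -
  obtain x where x: "x \<in> Z" using Z by blast
  obtain Y where Y: "Y \<subseteq> C - Z" "card Y = 4" using obtain_subset_with_card_n[OF W] by blast
  then obtain y1 y2 y3 y4 where Y_eq: "Y = {y1, y2, y3, y4}" and "distinct [y1, y2, y3, y4]"
    by (auto simp: card_Suc_eq numeral_eq_Suc)
  moreover have "a \<notin> C" "b \<notin> C" "c \<notin> C" "a < n" "b < n" "c < n"
    using abc Gamma_subset[of n E C Z] by auto
  ultimately have d: "distinct [a, b, c, x, y1, y2, y3, y4]"
    using x Y Z \<open>a \<noteq> b\<close> \<open>a \<noteq> c\<close> \<open>b \<noteq> c\<close> by auto
  have sym: "E u v \<Longrightarrow> E v u" for u v using simple_graph_sym[OF in_F_simple_graph[OF F]] .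
  have x_adj: "E g x" "E x g" if "g \<in> {a, b, c}" for g
    using that abc x Z sym by (auto simp: Gamma_adj_iff)
  have "is_clique n E {a, b, c, x}"
    using \<open>a < n\<close> \<open>b < n\<close> \<open>c < n\<close> x Z C edges sym x_adj unfolding is_clique_def by auto
  moreover have "is_clique n E {x, y1, y2, y3, y4}"
    using C x Y Y_eq Z unfolding is_clique_def by auto
  moreover have "\<forall>g\<in>{a, b, c}. \<forall>y\<in>{y1, y2, y3, y4}. \<not> E g y"
    using abc Y Y_eq by (auto simp: Gamma_adj_iff)
  ultimately show False using in_F_no_K4_K5_sharing_vertex[OF F _ _ _ d] by blast
qed

lemma Gamma_clique_card_le:
  assumes G: "simple_graph n E" and C: "max_clique n E C" and Z: "Z \<subseteq> C"
    and K: "K \<subseteq> Gamma n E C Z" "is_clique n E K"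
  shows "card K \<le> card (C - Z)"
proof -
  have CC: "is_clique n E C" and C_max: "\<And>D. is_clique n E D \<Longrightarrow> card D \<le> card C"
    using C unfolding max_clique_def by auto
  have finC: "finite C" using CC unfolding is_clique_def by (meson finite_atLeastLessThan finite_subset)
  have finK: "finite K" using K(2) unfolding is_clique_def by (meson finite_atLeastLessThan finite_subset)
  have KC: "K \<inter> C = {}" using K(1) Gamma_subset[of n E C Z] by blast
  have "E k z" if "k \<in> K" "z \<in> Z" for k z
    using Gamma_adj_iff[of k n E C Z z] that K(1) Z by blast
  moreover have "E z k \<Longrightarrow> E k z" for z k using simple_graph_sym[OF G] .
  ultimately have "is_clique n E (Z \<union> K)"
    using CC K(2) Z unfolding is_clique_def by blast
  then have "card (Z \<union> K) \<le> card C" by (rule C_max)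
  moreover have "card (Z \<union> K) = card Z + card K"
    using finC finK Z KC by (intro card_Un_disjoint) (auto intro: finite_subset)
  moreover have "card C = card Z + card (C - Z)"
    using finC Z by (metis card_Diff_subset finite_subset card_mono le_add_diff_inverse)
  ultimately show ?thesis by simp
qed

lemma transitive_graph_is_lK1_kK2_mK3:
  fixes E :: "nat \<Rightarrow> nat \<Rightarrow> bool"
  assumes S: "finite S" and sym: "\<And>a b. E a b \<Longrightarrow> E b a"
    and trans: "\<And>a b c. a \<in> S \<Longrightarrow> b \<in> S \<Longrightarrow> c \<in> S \<Longrightarrow> E a b \<Longrightarrow> E b c \<Longrightarrow> a \<noteq> c \<Longrightarrow> E a c"
    and bound: "\<And>K. K \<subseteq> S \<Longrightarrow> \<forall>a\<in>K. \<forall>b\<in>K. a \<noteq> b \<longrightarrow> E a b \<Longrightarrow> card K \<le> t"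
    and "t \<le> 3"
  shows "\<exists>l k m. is_lK1_kK2_mK3 E S l k m \<and> (t \<le> 2 \<longrightarrow> m = 0) \<and> (t \<le> 1 \<longrightarrow> k = 0)"
proof -
  define rel where "rel = {(a, b). a \<in> S \<and> b \<in> S \<and> (a = b \<or> E a b)}"
  have rel: "equiv S rel"
    unfolding rel_def by (rule equivI) (auto simp: refl_on_def sym_def trans_def intro: sym trans)
  define P where "P = S // rel"
  have clique: "E u v" if "B \<in> P" "u \<in> B" "v \<in> B" "u \<noteq> v" for B u v
    using in_quotient_imp_in_rel[OF rel, of B u v] that unfolding P_def rel_def by auto
  have card_B: "card B \<in> {1, 2, 3} \<and> card B \<le> t" if "B \<in> P" for B
  proof -
    have "B \<subseteq> S" "B \<noteq> {}"
      using that in_quotient_imp_subset[OF rel] in_quotient_imp_non_empty[OF rel] unfolding P_def by auto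
    then have "card B \<noteq> 0" using S by (meson card_0_eq finite_subset)
    moreover have "card B \<le> t" using bound clique that \<open>B \<subseteq> S\<close> by blast
    ultimately show ?thesis using \<open>t \<le> 3\<close> by auto
  qed
  have "is_lK1_kK2_mK3 E S (card {B\<in>P. card B = 1}) (card {B\<in>P. card B = 2}) (card {B\<in>P. card B = 3})"
    unfolding is_lK1_kK2_mK3_def
  proof (intro exI[of _ P] conjI ballI impI refl)
    show "finite P" unfolding P_def by (rule finite_quotient[OF S]) (auto simp: rel_def)
    show "\<Union>P = S" unfolding P_def by (rule Union_quotient[OF rel])
    show "B \<inter> B' = {}" if "B \<in> P" "B' \<in> P" "B \<noteq> B'" for B B'
      using quotient_disj[OF rel] that unfolding P_def by blast
    show "\<not> E u v" if "B \<in> P" "B' \<in> P" "B \<noteq> B'" "u \<in> B" "v \<in> B'" for B B' u v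
      using quotient_eqI[OF rel] in_quotient_imp_subset[OF rel] that unfolding P_def rel_def by blast
  qed (use card_B clique in auto)
  moreover have "t \<le> 2 \<longrightarrow> {B\<in>P. card B = 3} = {}" "t \<le> 1 \<longrightarrow> {B\<in>P. card B = 2} = {}"
    using card_B by fastforce+
  ultimately show ?thesis by fastforce
qed

lemma Gamma_is_lK1_kK2_mK3:
  assumes F: "in_F n E" and C: "max_clique n E C" and Z: "Z \<subseteq> C" "Z \<noteq> {}" "Z \<noteq> C"
  shows "(card (C - Z) = 1 \<longrightarrow> (\<exists>l. is_lK1_kK2_mK3 E (Gamma n E C Z) l 0 0)) \<and>
    (card (C - Z) = 2 \<longrightarrow> (\<exists>l k. is_lK1_kK2_mK3 E (Gamma n E C Z) l k 0)) \<and>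
    (card (C - Z) = 3 \<longrightarrow> (\<exists>l k m. is_lK1_kK2_mK3 E (Gamma n E C Z) l k m)) \<and>
    (card (C - Z) \<ge> 4 \<longrightarrow> (\<exists>l k. is_lK1_kK2_mK3 E (Gamma n E C Z) l k 0))"
proof -
  let ?S = "Gamma n E C Z"
  have G: "simple_graph n E" using in_F_simple_graph[OF F] .
  have CC: "is_clique n E C" using C unfolding max_clique_def by simp
  have S: "?S \<subseteq> {0..<n}" using Gamma_subset[of n E C Z] by blast
  have clique_iff: "is_clique n E K \<longleftrightarrow> (\<forall>a\<in>K. \<forall>b\<in>K. a \<noteq> b \<longrightarrow> E a b)" if "K \<subseteq> ?S" for K
    using that S unfolding is_clique_def by blast
  have cluster: "\<exists>l k m. is_lK1_kK2_mK3 E ?S l k m \<and> (t \<le> 2 \<longrightarrow> m = 0) \<and> (t \<le> 1 \<longrightarrow> k = 0)"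
    if "t \<le> 3" and "\<And>K. K \<subseteq> ?S \<Longrightarrow> is_clique n E K \<Longrightarrow> card K \<le> t" for t
  proof (rule transitive_graph_is_lK1_kK2_mK3)
    show "finite ?S" using S finite_subset by blast
    show "E a b \<Longrightarrow> E b a" for a b using simple_graph_sym[OF G] .
    show "E a c" if "a \<in> ?S" "b \<in> ?S" "c \<in> ?S" "E a b" "E b c" "a \<noteq> c" for a b c
      using Gamma_adj_transitive[OF F CC Z] that by blast
  qed (use that clique_iff in auto)
  have small: "card K \<le> card (C - Z)" if "K \<subseteq> ?S" "is_clique n E K" for K
    using Gamma_clique_card_le[OF G C Z(1) that] .
  have large: "card K \<le> 2" if "card (C - Z) \<ge> 4" "K \<subseteq> ?S" "is_clique n E K" for K
  proof (rule ccontr)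
    assume "\<not> card K \<le> 2"
    then have "3 \<le> card K" by simp
    then obtain T where "T \<subseteq> K" "card T = 3" by (rule obtain_subset_with_card_n)
    then obtain a b c where "a \<in> K" "b \<in> K" "c \<in> K" "a \<noteq> b" "a \<noteq> c" "b \<noteq> c"
      by (auto simp: card_Suc_eq numeral_eq_Suc)
    then show False
      using Gamma_triangle_free[OF F CC Z(1,2) that(1)] that(2,3) unfolding is_clique_def by blast
  qed
  show ?thesis
    using cluster[of "card (C - Z)"] cluster[of 2] small large by auto
qed

theorem proposition4p3:
  fixes n :: nat and E :: "nat \<Rightarrow> nat \<Rightarrow> bool" and C X Y :: "nat set"
  assumes F: "in_F n E"
    and Cmax: "max_clique n E C"
    and Cmin: "\<And>D. max_clique n E D \<Longrightarrow> boundary_edges n E C \<le> boundary_edges n E D"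
    and part: "X \<union> Y = C" "X \<inter> Y = {}" "X \<noteq> {}" "Y \<noteq> {}"
    and nb: "\<And>v. v \<in> {0..<n} - C \<Longrightarrow> nbrs_in E v C \<in> {X, Y, {}}"
  shows
    "(card Y = 1 \<longrightarrow> (\<exists>l. is_lK1_kK2_mK3 E (Gamma n E C X) l 0 0)) \<and>
     (card X = 1 \<longrightarrow> (\<exists>l. is_lK1_kK2_mK3 E (Gamma n E C Y) l 0 0)) \<and>
     (card Y = 2 \<longrightarrow> (\<exists>l k. is_lK1_kK2_mK3 E (Gamma n E C X) l k 0)) \<and>
     (card X = 2 \<longrightarrow> (\<exists>l k. is_lK1_kK2_mK3 E (Gamma n E C Y) l k 0)) \<and>
     (card Y = 3 \<longrightarrow> (\<exists>l k m. is_lK1_kK2_mK3 E (Gamma n E C X) l k m)) \<and>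
     (card X = 3 \<longrightarrow> (\<exists>l k m. is_lK1_kK2_mK3 E (Gamma n E C Y) l k m)) \<and>
     (card Y \<ge> 4 \<longrightarrow> (\<exists>l k. is_lK1_kK2_mK3 E (Gamma n E C X) l k 0)) \<and>
     (card X \<ge> 4 \<longrightarrow> (\<exists>l k. is_lK1_kK2_mK3 E (Gamma n E C Y) l k 0))"
proof -
  have "X \<subseteq> C" "X \<noteq> {}" "X \<noteq> C" "C - X = Y" "Y \<subseteq> C" "Y \<noteq> {}" "Y \<noteq> C" "C - Y = X"
    using part by auto
  then show ?thesis
    using Gamma_is_lK1_kK2_mK3[OF F Cmax, of X] Gamma_is_lK1_kK2_mK3[OF F Cmax, of Y] by simp
qed

end
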